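(* Let $k\ge2$ and let $\tau\in\mathcal{S}_k$ be layered. Then there is a unique involution $\tilde\tau\in\mathcal{S}_{k+2}$ whose length-$k$ initial pattern equals $\tau$ and whose length-$(k+1)$ initial pattern is not an involution.
   Context: $\tau\in\mathcal{S}_k$ is layered if for some composition $(a_1,\ldots,a_m)$ of $k$ (all $a_i\ge1$), $\tau$ consists of the first $a_1$ positive integers in decreasing order, followed by the next $a_2$ positive integers in decreasing order, and so on. The pattern of a word of $j$ distinct letters is its order-preserving relabeling by $\{1,\ldots,j\}$; the length-$j$ initial pattern of a permutation $\sigma$ is the pattern of $\sigma_1\ldots\sigma_j$. *)

theory Defs
  imports Main
begin

text \<open>Permutations in S_n are represented in one-line notation as lists
  sigma_1 ... sigma_n of the values 1..n.\<close>

definition is_perm :: "nat \<Rightarrow> nat list \<Rightarrow> bool" where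
  "is_perm n xs \<longleftrightarrow> length xs = n \<and> distinct xs \<and> set xs = {1..n}"

text \<open>Involution: sigma(sigma(i)) = i for all positions i (1-indexed).\<close>
definition is_involution :: "nat list \<Rightarrow> bool" where
  "is_involution xs \<longleftrightarrow> (\<forall>i < length xs. xs ! (xs ! i - 1) = i + 1)"

text \<open>Pattern of a word of distinct letters: order-preserving relabeling by 1..j.\<close>
definition pattern :: "nat list \<Rightarrow> nat list" where
  "pattern xs = map (\<lambda>x. card {y \<in> set xs. y \<le> x}) xs"

text \<open>Layered permutation built from a composition, starting after offset s.\<close>
fun layered_of :: "nat list \<Rightarrow> nat \<Rightarrow> nat list" where
  "layered_of [] s = []"
| "layered_of (a # as) s = rev [s + 1..<s + a + 1] @ layered_of as (s + a)"

definition layered :: "nat \<Rightarrow> nat list \<Rightarrow> bool" where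
  "layered k tau \<longleftrightarrow> (\<exists>as. (\<forall>a \<in> set as. a \<ge> 1) \<and> sum_list as = k \<and> tau = layered_of as 0)"

end

theory Submission
  imports Defs
begin

(*
  A solution t is determined by its last two values x = t(k+1), y = t(k+2): its first k
  entries are tau relabelled order-preservingly to avoid x and y. So it suffices to show
  that exactly one pair (x, y) makes this extension an involution whose length-(k+1)
  initial pattern is not one.

  Let the last layer of tau occupy the positions s+1..k. If y >= k+1, deleting the last
  letter of t leaves an involution, so y <= k; then t(y) = k+2 forces tau(y) = k, that is
  y = s+1. Likewise x = k+1, or x <= k and tau(x) = k-1. Checking the few remaining
  candidates directly: if the last layer has length at least 2 the pair is (k+1, s+1);
  if it is a singleton, the pair is (s'+1, k), where s'+1 starts the preceding layer.
*)

definition entry :: "nat list \<Rightarrow> nat \<Rightarrow> nat" where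
  "entry xs i = xs ! (i - 1)"

lemma all_less_iff_all_pos: "(\<forall>i < (n :: nat). P i) \<longleftrightarrow> (\<forall>i. 1 \<le> i \<and> i \<le> n \<longrightarrow> P (i - 1))"
proof safe
  fix i assume "\<forall>i < n. P i" "1 \<le> i" "i \<le> n"
  moreover from this have "i - 1 < n" by simp
  ultimately show "P (i - 1)" by blast
next
  fix i assume "\<forall>i. 1 \<le> i \<and> i \<le> n \<longrightarrow> P (i - 1)" "i < n"
  then show "P i" by (metis add_diff_cancel_right' le_add2 Suc_leI Suc_eq_plus1)
qed

lemma is_involution_iff_entry:
  "is_involution xs \<longleftrightarrow> (\<forall>i. 1 \<le> i \<and> i \<le> length xs \<longrightarrow> entry xs (entry xs i) = i)"
  unfolding is_involution_def all_less_iff_all_pos by (auto simp: entry_def)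

lemma not_involution_if_entry:
  "1 \<le> i \<Longrightarrow> i \<le> length xs \<Longrightarrow> entry xs (entry xs i) \<noteq> i \<Longrightarrow> \<not> is_involution xs"
  by (auto simp: is_involution_iff_entry)

lemma entry_append:
  "1 \<le> i \<Longrightarrow> entry (xs @ ys) i = (if i \<le> length xs then entry xs i else entry ys (i - length xs))"
  by (auto simp: entry_def nth_append)

lemma entry_take: "i \<le> n \<Longrightarrow> 1 \<le> i \<Longrightarrow> entry (take n xs) i = entry xs i"
  by (simp add: entry_def)

lemma entry_rev_upt: "1 \<le> i \<Longrightarrow> i \<le> a \<Longrightarrow> entry (rev [s + 1..<s + a + 1]) i = s + a + 1 - i"
  by (simp add: entry_def rev_nth del: upt_Suc)

lemma is_perm_entry_range:
  assumes "is_perm n xs" "1 \<le> i" "i \<le> n"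
  shows "1 \<le> entry xs i \<and> entry xs i \<le> n"
proof -
  have "xs ! (i - 1) \<in> set xs" using assms by (intro nth_mem) (simp add: is_perm_def)
  then have "xs ! (i - 1) \<in> {1..n}" using assms(1) by (simp add: is_perm_def)
  then show ?thesis by (simp add: entry_def)
qed

lemma is_perm_entry_inj:
  "is_perm n xs \<Longrightarrow> 1 \<le> i \<Longrightarrow> i \<le> n \<Longrightarrow> 1 \<le> j \<Longrightarrow> j \<le> n \<Longrightarrow>
    entry xs i = entry xs j \<Longrightarrow> i = j"
  unfolding is_perm_def entry_def
  by (metis Suc_diff_1 Suc_le_eq distinct_conv_nth le_eq_less_or_eq zero_less_one order_less_le_trans)

lemma is_perm_if_range_distinct:
  assumes "length xs = n" "distinct xs" "set xs \<subseteq> {1..n}"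
  shows "is_perm n xs"
  using assms card_subset_eq[of "{1..n}" "set xs"] distinct_card[of xs]
  by (simp add: is_perm_def)

lemma pattern_map_strict_mono:
  assumes "strict_mono_on (set xs) f"
  shows "pattern (map f xs) = pattern xs"
proof -
  have "card {y \<in> f ` set xs. y \<le> f x} = card {y \<in> set xs. y \<le> x}" if "x \<in> set xs" for x
  proof -
    have "{y \<in> f ` set xs. y \<le> f x} = f ` {y \<in> set xs. y \<le> x}"
      using that strict_mono_on_leD[OF assms] strict_mono_on_less_eq[OF assms] by auto
    moreover have "inj_on f {y \<in> set xs. y \<le> x}"
      using strict_mono_on_imp_inj_on[OF assms] by (rule inj_on_subset) auto
    ultimately show ?thesis by (simp add: card_image)
  qed
  then show ?thesis by (simp add: pattern_def)
qed

lemma pattern_of_perm: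
  assumes "is_perm n xs"
  shows "pattern xs = xs"
proof -
  have set: "set xs = {1..n}" using assms by (simp add: is_perm_def)
  have card: "card {y \<in> {1..n}. y \<le> x} = x" if "x \<in> {1..n}" for x
  proof -
    have "{y \<in> {1..n}. y \<le> x} = {1..x}" using that by auto
    then show ?thesis by simp
  qed
  show ?thesis
    unfolding pattern_def set by (rule map_idI) (use card set in blast)
qed

lemma card_le_strict_mono:
  assumes "finite S" "x' \<in> S" "x < (x' :: 'a :: linorder)"
  shows "card {y \<in> S. y \<le> x} < card {y \<in> S. y \<le> x'}"
proof (rule psubset_card_mono)
  show "finite {y \<in> S. y \<le> x'}" using assms(1) by simp
  have "x' \<in> {y \<in> S. y \<le> x'} - {y \<in> S. y \<le> x}" using assms(2,3) by auto
  then show "{y \<in> S. y \<le> x} \<subset> {y \<in> S. y \<le> x'}" using assms(3) by fastforce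
qed

lemma pattern_inj:
  assumes "set xs = set ys" "pattern xs = pattern ys"
  shows "xs = ys"
proof (rule nth_equalityI)
  show len: "length xs = length ys" using arg_cong[OF assms(2), of length] by (simp add: pattern_def)
  fix i assume "i < length xs"
  then have mem: "xs ! i \<in> set ys" "ys ! i \<in> set ys" using assms(1) len by (metis nth_mem)+
  have eq: "card {y \<in> set ys. y \<le> xs ! i} = card {y \<in> set ys. y \<le> ys ! i}"
    using assms \<open>i < length xs\<close> len by (simp add: pattern_def list_eq_iff_nth_eq)
  show "xs ! i = ys ! i"
  proof (rule ccontr)
    assume "xs ! i \<noteq> ys ! i"
    then consider "xs ! i < ys ! i" | "ys ! i < xs ! i" by linarith
    then show False
    proof cases
      case 1
      with mem have "card {y \<in> set ys. y \<le> xs ! i} < card {y \<in> set ys. y \<le> ys ! i}"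
        by (intro card_le_strict_mono) simp_all
      with eq show False by simp
    next
      case 2
      with mem have "card {y \<in> set ys. y \<le> ys ! i} < card {y \<in> set ys. y \<le> xs ! i}"
        by (intro card_le_strict_mono) simp_all
      with eq show False by simp
    qed
  qed
qed

lemma entry_pattern:
  "1 \<le> i \<Longrightarrow> i \<le> length xs \<Longrightarrow> entry (pattern xs) i = card {v \<in> set xs. v \<le> entry xs i}"
  by (simp add: pattern_def entry_def)

lemma drop_eq_last_two: "length t = k + 2 \<Longrightarrow> drop k t = [entry t (k + 1), entry t (k + 2)]"
  by (rule nth_equalityI) (auto simp: entry_def less_2_cases_iff)

lemma set_take_perm:
  assumes "is_perm n t"
  shows "set (take m t) = {1..n} - set (drop m t)"
proof -
  have "set t = set (take m t) \<union> set (drop m t)" by (metis set_append append_take_drop_id)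
  moreover have "set (take m t) \<inter> set (drop m t) = {}"
    using assms by (intro set_take_disj_set_drop_if_distinct) (simp_all add: is_perm_def)
  ultimately show ?thesis using assms by (auto simp: is_perm_def)
qed

lemma entry_pattern_butlast:
  assumes t: "is_perm (n + 1) t" and i: "1 \<le> i" "i \<le> n"
  shows "entry (pattern (take n t)) i =
    (if entry t i < entry t (n + 1) then entry t i else entry t i - 1)"
proof -
  let ?y = "entry t (n + 1)" and ?w = "entry t i"
  have len: "length t = n + 1" using t by (simp add: is_perm_def)
  have "drop n t = [?y]" using len by (intro nth_equalityI) (simp_all add: entry_def)
  then have set_take: "set (take n t) = {1..n + 1} - {?y}" using set_take_perm[OF t] by simp
  have w: "1 \<le> ?w" "?w \<le> n + 1" using is_perm_entry_range[OF t, of i] i by auto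
  have "?w \<noteq> ?y" using is_perm_entry_inj[OF t, of i "n + 1"] i by auto
  have "entry (pattern (take n t)) i = card {v \<in> set (take n t). v \<le> ?w}"
    using i len by (simp add: entry_pattern entry_take)
  also have "{v \<in> set (take n t). v \<le> ?w} = {1..?w} - {?y}"
    unfolding set_take using w(2) by (simp add: set_eq_iff) linarith
  also have "card ({1..?w} - {?y}) = (if ?w < ?y then ?w else ?w - 1)"
    using \<open>?w \<noteq> ?y\<close> is_perm_entry_range[OF t, of "n + 1"] by (simp add: card_Diff_singleton_if)
  finally show ?thesis .
qed

lemma is_involution_pattern_butlast:
  assumes t: "is_perm (n + 1) t" "is_involution t" and y: "n \<le> entry t (n + 1)"
  shows "is_involution (pattern (take n t))"
  unfolding is_involution_iff_entry
proof (intro allI impI)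
  let ?T = "entry t" and ?\<sigma> = "entry (pattern (take n t))"
  have len: "length t = n + 1" using t(1) by (simp add: is_perm_def)
  have inv: "?T (?T j) = j" if "1 \<le> j" "j \<le> n + 1" for j
    using t(2) len that by (simp add: is_involution_iff_entry)
  have rng: "1 \<le> ?T j \<and> ?T j \<le> n + 1" if "1 \<le> j" "j \<le> n + 1" for j
    using is_perm_entry_range[OF t(1) that] .
  have ne_last: "?T j \<noteq> ?T (n + 1)" if "1 \<le> j" "j \<le> n" for j
    using is_perm_entry_inj[OF t(1), of j "n + 1"] that by auto
  have \<sigma>: "?\<sigma> j = (if ?T j < ?T (n + 1) then ?T j else ?T j - 1)" if "1 \<le> j" "j \<le> n" for j
    using entry_pattern_butlast[OF t(1) that] .
  fix i assume "1 \<le> i \<and> i \<le> length (pattern (take n t))"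
  then have i: "1 \<le> i" "i \<le> n" using len by (auto simp: pattern_def)
  consider "?T (n + 1) = n + 1" | "?T (n + 1) = n" using y rng[of "n + 1"] by linarith
  then show "?\<sigma> (?\<sigma> i) = i"
  proof cases
    case 1
    have "?T i \<le> n" using rng[of i] ne_last[OF i] i 1 by auto
    then show ?thesis using \<sigma>[OF i] \<sigma>[of "?T i"] rng[of i] inv[of i] i 1 by simp
  next
    case 2
    have Tn: "?T n = n + 1" using inv[of "n + 1"] 2 by simp
    show ?thesis
    proof (cases "i = n")
      case True
      then show ?thesis using \<sigma>[OF i] 2 Tn by simp
    next
      case False
      have "?T i \<noteq> n" using ne_last[OF i] 2 by simp
      moreover have "?T i \<noteq> n + 1" using is_perm_entry_inj[OF t(1), of i n] Tn i False by auto
      ultimately have "?T i < n" using rng[of i] i by simp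
      then show ?thesis using \<sigma>[OF i] \<sigma>[of "?T i"] rng[of i] inv[of i] i False 2 by simp
    qed
  qed
qed

text \<open>For distinct positive \<open>x\<close>, \<open>y\<close>, \<open>nth_avoiding x y j\<close> is the \<open>j\<close>-th positive integer
  other than \<open>x\<close> and \<open>y\<close>.\<close>

definition nth_avoiding :: "nat \<Rightarrow> nat \<Rightarrow> nat \<Rightarrow> nat" where
  "nth_avoiding x y j = (if j < min x y then j else if j + 1 < max x y then j + 1 else j + 2)"

lemma strict_mono_nth_avoiding: "strict_mono (nth_avoiding x y)"
  by (rule strict_monoI) (auto simp: nth_avoiding_def)

lemma nth_avoiding_neq: "nth_avoiding x y j \<noteq> x" "nth_avoiding x y j \<noteq> y"
  by (auto simp: nth_avoiding_def)

lemma nth_avoiding_bounds: "j \<le> nth_avoiding x y j \<and> nth_avoiding x y j \<le> j + 2"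
  by (simp add: nth_avoiding_def)

definition extend_with :: "nat list \<Rightarrow> nat \<Rightarrow> nat \<Rightarrow> nat list" where
  "extend_with \<tau> x y = map (nth_avoiding x y) \<tau> @ [x, y]"

lemma entry_extend_with:
  assumes "length \<tau> = k" "1 \<le> i" "i \<le> k + 2"
  shows "entry (extend_with \<tau> x y) i =
    (if i \<le> k then nth_avoiding x y (entry \<tau> i) else if i = k + 1 then x else y)"
  using assms by (auto simp: extend_with_def entry_def nth_append)

lemma extend_with_is_perm:
  assumes \<tau>: "is_perm k \<tau>" and xy: "x \<noteq> y" "x \<in> {1..k + 2}" "y \<in> {1..k + 2}"
  shows "is_perm (k + 2) (extend_with \<tau> x y)"
proof (rule is_perm_if_range_distinct)
  have "inj (nth_avoiding x y)" using strict_mono_nth_avoiding by (rule strict_mono_imp_inj_on)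
  then have "distinct (map (nth_avoiding x y) \<tau>)"
    using \<tau> by (simp add: is_perm_def distinct_map inj_on_subset[of _ UNIV])
  then show "distinct (extend_with \<tau> x y)"
    using xy(1) nth_avoiding_neq[symmetric] by (auto simp: extend_with_def)
  have "nth_avoiding x y j \<in> {1..k + 2}" if "j \<in> set \<tau>" for j
    using that \<tau> nth_avoiding_bounds[of j x y] by (auto simp: is_perm_def)
  then show "set (extend_with \<tau> x y) \<subseteq> {1..k + 2}"
    using xy by (auto simp: extend_with_def)
qed (use \<tau> in \<open>simp add: extend_with_def is_perm_def\<close>)

lemma pattern_take_extend_with:
  assumes "is_perm k \<tau>"
  shows "pattern (take k (extend_with \<tau> x y)) = \<tau>"
proof -
  have "strict_mono_on (set \<tau>) (nth_avoiding x y)"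
    by (rule monotone_on_subset[OF strict_mono_nth_avoiding]) simp
  then have "pattern (map (nth_avoiding x y) \<tau>) = \<tau>"
    using assms by (simp add: pattern_map_strict_mono pattern_of_perm)
  then show ?thesis using assms by (simp add: extend_with_def is_perm_def)
qed

lemma eq_extend_with:
  assumes \<tau>: "is_perm k \<tau>" and t: "is_perm (k + 2) t" and pat: "pattern (take k t) = \<tau>"
  shows "t = extend_with \<tau> (entry t (k + 1)) (entry t (k + 2))"
proof -
  let ?x = "entry t (k + 1)" and ?y = "entry t (k + 2)"
  let ?e = "extend_with \<tau> ?x ?y"
  have "?x \<noteq> ?y" using is_perm_entry_inj[OF t, of "k + 1" "k + 2"] by auto
  moreover have "?x \<in> {1..k + 2}" "?y \<in> {1..k + 2}" using is_perm_entry_range[OF t] by auto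
  ultimately have e: "is_perm (k + 2) ?e" using extend_with_is_perm[OF \<tau>] by blast
  have len: "length t = k + 2" "length ?e = k + 2" using t e by (simp_all add: is_perm_def)
  have "drop k ?e = [?x, ?y]" using \<tau> by (simp add: extend_with_def is_perm_def)
  moreover have drop_t: "drop k t = [?x, ?y]" using drop_eq_last_two[OF len(1)] .
  ultimately have "set (take k t) = set (take k ?e)"
    using set_take_perm[OF t] set_take_perm[OF e] by simp
  moreover have "pattern (take k t) = pattern (take k ?e)"
    using pat pattern_take_extend_with[OF \<tau>] by simp
  ultimately have "take k t = take k ?e" by (rule pattern_inj)
  then show ?thesis using drop_t \<open>drop k ?e = [?x, ?y]\<close> by (metis append_take_drop_id)
qed

lemma length_layered_of [simp]: "length (layered_of as s) = sum_list as"
  by (induction as arbitrary: s) auto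

lemma layered_of_append:
  "layered_of (as @ bs) s = layered_of as s @ layered_of bs (s + sum_list as)"
  by (induction as arbitrary: s) (auto simp: add.assoc)

lemma distinct_set_layered_of:
  "distinct (layered_of as s) \<and> set (layered_of as s) = {s <.. s + sum_list as}"
proof (induction as arbitrary: s)
  case (Cons a as)
  have "{s <.. s + a} \<union> {s + a <.. s + a + sum_list as} = {s <.. s + a + sum_list as}"
    by auto
  then show ?case using Cons.IH[of "s + a"] by (auto simp del: upt_Suc)
qed simp

lemma entry_entry_layered_of:
  assumes "1 \<le> i" "i \<le> sum_list as"
  shows "entry (layered_of as s) (entry (layered_of as s) i - s) = i + s"
  using assms
proof (induction as arbitrary: s i)
  case (Cons a as)
  let ?L = "layered_of as (s + a)"
  show ?case
  proof (cases "i \<le> a")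
    case True
    have block: "entry (layered_of (a # as) s) j = s + a + 1 - j" if "1 \<le> j" "j \<le> a" for j
      using that entry_rev_upt[of j a s] by (simp add: entry_append del: upt_Suc)
    show ?thesis using block[of i] block[of "a + 1 - i"] True Cons.prems by simp
  next
    case False
    let ?v = "entry ?L (i - a)"
    have v: "?v \<in> {s + a <.. s + a + sum_list as}"
      using distinct_set_layered_of[of as "s + a"] Cons.prems False
      by (auto simp: entry_def)
    have rest: "entry (layered_of (a # as) s) j = entry ?L (j - a)" if "a < j" for j
      using that by (simp add: entry_append del: upt_Suc)
    have "a < ?v - s" using v by (simp add: less_diff_conv add.commute)
    then have "entry (layered_of (a # as) s) (?v - s) = entry ?L (?v - s - a)" by (rule rest)
    then have "entry (layered_of (a # as) s) (?v - s) = entry ?L (?v - (s + a))"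
      by (simp only: diff_diff_add)
    then show ?thesis
      using Cons.IH[of "i - a" "s + a"] Cons.prems False rest[of i] by (simp del: layered_of.simps)
  qed
qed simp

lemma layered_is_perm: "layered n \<tau> \<Longrightarrow> is_perm n \<tau>"
  using distinct_set_layered_of[of _ 0] by (auto simp: layered_def is_perm_def)

lemma layered_is_involution: "layered n \<tau> \<Longrightarrow> is_involution \<tau>"
  using entry_entry_layered_of[of _ _ 0] by (auto simp: layered_def is_involution_iff_entry)

definition admissible_pair :: "nat \<Rightarrow> nat list \<Rightarrow> nat \<Rightarrow> nat \<Rightarrow> bool" where
  "admissible_pair k \<tau> x y \<longleftrightarrow> x \<noteq> y \<and> x \<in> {1..k + 2} \<and> y \<in> {1..k + 2} \<and>
     is_involution (extend_with \<tau> x y) \<and>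
     \<not> is_involution (pattern (take (k + 1) (extend_with \<tau> x y)))"

lemma solution_iff_admissible_pair:
  assumes \<tau>: "is_perm k \<tau>"
  shows "(is_perm (k + 2) t \<and> is_involution t \<and> pattern (take k t) = \<tau> \<and>
            \<not> is_involution (pattern (take (k + 1) t))) \<longleftrightarrow>
         (\<exists>x y. admissible_pair k \<tau> x y \<and> t = extend_with \<tau> x y)"
proof
  assume sol: "is_perm (k + 2) t \<and> is_involution t \<and> pattern (take k t) = \<tau> \<and>
    \<not> is_involution (pattern (take (k + 1) t))"
  let ?x = "entry t (k + 1)" and ?y = "entry t (k + 2)"
  have "t = extend_with \<tau> ?x ?y" using eq_extend_with[OF \<tau>] sol by blast
  moreover have "?x \<noteq> ?y" "?x \<in> {1..k + 2}" "?y \<in> {1..k + 2}"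
    using sol is_perm_entry_inj[of "k + 2" t "k + 1" "k + 2"] is_perm_entry_range[of "k + 2" t]
    by auto
  ultimately show "\<exists>x y. admissible_pair k \<tau> x y \<and> t = extend_with \<tau> x y"
    using sol unfolding admissible_pair_def by metis
next
  assume "\<exists>x y. admissible_pair k \<tau> x y \<and> t = extend_with \<tau> x y"
  then show "is_perm (k + 2) t \<and> is_involution t \<and> pattern (take k t) = \<tau> \<and>
    \<not> is_involution (pattern (take (k + 1) t))"
    using extend_with_is_perm[OF \<tau>] pattern_take_extend_with[OF \<tau>]
    unfolding admissible_pair_def by blast
qed

locale last_layer =
  fixes k s :: nat and \<tau> :: "nat list"
  assumes perm: "is_perm k \<tau>" and head_less: "s < k" and head: "layered s (take s \<tau>)"
    and tail: "\<And>j. s < j \<Longrightarrow> j \<le> k \<Longrightarrow> entry \<tau> j = k + s + 1 - j"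

lemma layered_last_layer:
  assumes "layered k \<tau>" "0 < k"
  obtains s where "last_layer k s \<tau>"
proof -
  obtain as where as: "\<forall>a \<in> set as. 1 \<le> a" "sum_list as = k" "\<tau> = layered_of as 0"
    using assms(1) by (auto simp: layered_def)
  then obtain bs a where as_eq: "as = bs @ [a]" using assms(2) by (cases as rule: rev_cases) auto
  define s where "s = sum_list bs"
  have sa: "s + a = k" "1 \<le> a" using as as_eq by (auto simp: s_def)
  have \<tau>: "\<tau> = layered_of bs 0 @ rev [s + 1..<s + a + 1]"
    using as(3) as_eq by (simp add: layered_of_append s_def del: upt_Suc)
  have "last_layer k s \<tau>"
  proof
    show "is_perm k \<tau>" using assms(1) by (rule layered_is_perm)
    show "s < k" using sa by simp
    have "take s \<tau> = layered_of bs 0" by (simp add: \<tau> s_def)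
    then show "layered s (take s \<tau>)" using as(1) as_eq by (auto simp: layered_def s_def)
    fix j assume "s < j" "j \<le> k"
    then show "entry \<tau> j = k + s + 1 - j"
      using entry_rev_upt[of "j - s" a s] sa by (simp add: \<tau> entry_append s_def del: upt_Suc)
  qed
  then show thesis by (rule that)
qed

context last_layer
begin

lemma length_tau [simp]: "length \<tau> = k"
  using perm by (simp add: is_perm_def)

lemma head_entry:
  "1 \<le> i \<Longrightarrow> i \<le> s \<Longrightarrow> 1 \<le> entry \<tau> i \<and> entry \<tau> i \<le> s \<and> entry \<tau> (entry \<tau> i) = i"
  using is_perm_entry_range[OF layered_is_perm[OF head]] layered_is_involution[OF head] head_less
  by (simp add: is_involution_iff_entry entry_take)

lemma entry_extend:
  "1 \<le> i \<Longrightarrow> i \<le> k + 2 \<Longrightarrow> entry (extend_with \<tau> x y) i =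
    (if i \<le> k then nth_avoiding x y (entry \<tau> i) else if i = k + 1 then x else y)"
  by (simp add: entry_extend_with)

lemma entry_pattern_extend:
  assumes "x \<noteq> y" "x \<in> {1..k + 2}" "y \<in> {1..k + 2}" "1 \<le> i" "i \<le> k + 1"
  shows "entry (pattern (take (k + 1) (extend_with \<tau> x y))) i =
    (let w = entry (extend_with \<tau> x y) i in if w < y then w else w - 1)"
proof -
  have "is_perm (k + 1 + 1) (extend_with \<tau> x y)"
    using extend_with_is_perm[OF perm assms(1-3)] by simp
  from entry_pattern_butlast[OF this assms(4,5)] show ?thesis by (simp add: entry_extend)
qed

lemma admissible_long_layer:
  assumes long: "s + 1 < k"
  shows "admissible_pair k \<tau> (k + 1) (s + 1)"
proof -
  let ?t = "extend_with \<tau> (k + 1) (s + 1)"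
  have T: "entry ?t i = (if i \<le> s then entry \<tau> i else if i = s + 1 then k + 2
      else if i \<le> k then k + s + 2 - i else if i = k + 1 then k + 1 else s + 1)"
    if "1 \<le> i" "i \<le> k + 2" for i
  proof -
    consider "i \<le> s" | "s < i" "i \<le> k" | "k < i" by linarith
    then show ?thesis
    proof cases
      case 1
      then show ?thesis
        using head_entry[OF that(1) 1] that long by (simp add: entry_extend nth_avoiding_def)
    next
      case 2
      then show ?thesis using tail[OF 2] that long by (auto simp: entry_extend nth_avoiding_def)
    qed (use that long in \<open>auto simp: entry_extend\<close>)
  qed
  have "is_involution ?t"
    unfolding is_involution_iff_entry
  proof (intro allI impI)
    fix i assume "1 \<le> i \<and> i \<le> length ?t"
    then have i: "1 \<le> i" "i \<le> k + 2" by (simp_all add: extend_with_def)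
    consider "i \<le> s" | "i = s + 1" | "s + 1 < i" "i \<le> k" | "i = k + 1" | "i = k + 2"
      using i by linarith
    then show "entry ?t (entry ?t i) = i"
    proof cases
      case 1
      then show ?thesis using T[OF i] T[of "entry \<tau> i"] head_entry[of i] i long by simp
    next
      case 3
      define j where "j = k + s + 2 - i"
      have j: "s + 1 < j" "j \<le> k" "k + s + 2 - j = i" using 3 by (auto simp: j_def)
      have "entry ?t i = j" using T[OF i] 3 by (simp add: j_def)
      then show ?thesis using T[of j] j by simp
    qed (use T long in simp_all)
  qed
  moreover have "\<not> is_involution (pattern (take (k + 1) ?t))"
  proof -
    let ?\<sigma> = "entry (pattern (take (k + 1) ?t))"
    have "?\<sigma> (k + 1) = k" "?\<sigma> k = s + 1"
      using entry_pattern_extend[of "k + 1" "s + 1"] T long by (simp_all add: Let_def)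
    then have "?\<sigma> (?\<sigma> (k + 1)) \<noteq> k + 1" using long by simp
    then show ?thesis
      by (rule not_involution_if_entry[rotated 2]) (simp_all add: extend_with_def pattern_def)
  qed
  ultimately show ?thesis using long by (simp add: admissible_pair_def)
qed

lemma pattern_involution_if_long_layer:
  assumes long: "s + 1 < k"
  shows "is_involution (pattern (take (k + 1) (extend_with \<tau> (s + 2) (s + 1))))"
proof -
  let ?t = "extend_with \<tau> (s + 2) (s + 1)"
  let ?\<sigma> = "entry (pattern (take (k + 1) ?t))"
  have T: "entry ?t i = (if i \<le> s then entry \<tau> i else if i \<le> k then k + s + 3 - i
      else if i = k + 1 then s + 2 else s + 1)"
    if "1 \<le> i" "i \<le> k + 2" for i
  proof -
    consider "i \<le> s" | "s < i" "i \<le> k" | "k < i" by linarith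
    then show ?thesis
    proof cases
      case 1
      then show ?thesis
        using head_entry[OF that(1) 1] that long by (simp add: entry_extend nth_avoiding_def)
    next
      case 2
      then show ?thesis using tail[OF 2] that long by (auto simp: entry_extend nth_avoiding_def)
    qed (use that long in \<open>auto simp: entry_extend\<close>)
  qed
  have \<sigma>: "?\<sigma> i = (if i \<le> s then entry \<tau> i else k + s + 2 - i)" if "1 \<le> i" "i \<le> k + 1" for i
  proof (cases "i \<le> s")
    case True
    then show ?thesis
      using that entry_pattern_extend[of "s + 2" "s + 1" i] T[of i] head_entry[OF that(1) True] long
      by (simp add: Let_def)
  qed (use that entry_pattern_extend[of "s + 2" "s + 1" i] T[of i] long in \<open>auto simp: Let_def\<close>)
  show ?thesis
    unfolding is_involution_iff_entry
  proof (intro allI impI)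
    fix i assume "1 \<le> i \<and> i \<le> length (pattern (take (k + 1) ?t))"
    then have i: "1 \<le> i" "i \<le> k + 1" by (simp_all add: extend_with_def pattern_def)
    show "?\<sigma> (?\<sigma> i) = i"
    proof (cases "i \<le> s")
      case True
      then show ?thesis using \<sigma>[OF i] \<sigma>[of "entry \<tau> i"] head_entry[of i] i long by simp
    next
      case False
      moreover have "\<not> k + s + 2 - i \<le> s" using i by simp
      ultimately show ?thesis using \<sigma>[OF i] \<sigma>[of "k + s + 2 - i"] i by simp
    qed
  qed
qed

lemma pattern_involution_if_singleton_layer:
  assumes single: "s + 1 = k"
  shows "is_involution (pattern (take (k + 1) (extend_with \<tau> (k + 1) k)))"
proof -
  let ?t = "extend_with \<tau> (k + 1) k"
  let ?\<sigma> = "entry (pattern (take (k + 1) ?t))"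
  have T: "entry ?t i =
      (if i < k then entry \<tau> i else if i = k then k + 2 else if i = k + 1 then k + 1 else k)"
    if "1 \<le> i" "i \<le> k + 2" for i
  proof -
    consider "i < k" | "i = k" | "k < i" by linarith
    then show ?thesis
    proof cases
      case 1
      then have "i \<le> s" using single by simp
      then show ?thesis
        using head_entry[OF that(1)] that single by (simp add: entry_extend nth_avoiding_def)
    next
      case 2
      then show ?thesis using tail[of k] that single by (simp add: entry_extend nth_avoiding_def)
    qed (use that in \<open>auto simp: entry_extend\<close>)
  qed
  have \<sigma>: "?\<sigma> i = (if i < k then entry \<tau> i else if i = k then k + 1 else k)"
    if "1 \<le> i" "i \<le> k + 1" for i
  proof (cases "i < k")
    case True
    then show ?thesis
      using that entry_pattern_extend[of "k + 1" k i] T[of i] head_entry[OF that(1)] single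
      by (simp add: Let_def)
  qed (use that entry_pattern_extend[of "k + 1" k i] T[of i] single in \<open>auto simp: Let_def\<close>)
  show ?thesis
    unfolding is_involution_iff_entry
  proof (intro allI impI)
    fix i assume "1 \<le> i \<and> i \<le> length (pattern (take (k + 1) ?t))"
    then have i: "1 \<le> i" "i \<le> k + 1" by (simp_all add: extend_with_def pattern_def)
    show "?\<sigma> (?\<sigma> i) = i"
    proof (cases "i < k")
      case True
      then show ?thesis using \<sigma>[OF i] \<sigma>[of "entry \<tau> i"] head_entry[of i] i single by simp
    next
      case False
      then show ?thesis using \<sigma>[OF i] \<sigma>[of k] \<sigma>[of "k + 1"] i single by auto
    qed
  qed
qed

lemma admissible_singleton_layer:
  assumes single: "s + 1 = k" and inner: "last_layer s s' (take s \<tau>)"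
  shows "admissible_pair k \<tau> (s' + 1) k"
proof -
  interpret inner: last_layer s s' "take s \<tau>" by (fact inner)
  have inner_head: "1 \<le> entry \<tau> i \<and> entry \<tau> i \<le> s' \<and> entry \<tau> (entry \<tau> i) = i"
    if "1 \<le> i" "i \<le> s'" for i
  proof -
    have eq: "entry (take s \<tau>) j = entry \<tau> j" if "j \<le> s'" for j
      using that inner.head_less by (simp add: entry_def)
    have h: "1 \<le> entry \<tau> i" "entry \<tau> i \<le> s'" "entry (take s \<tau>) (entry \<tau> i) = i"
      using inner.head_entry[OF that] eq[OF that(2)] by simp_all
    then show ?thesis using eq[OF h(2)] by simp
  qed
  have inner_tail: "entry \<tau> j = k + s' - j" if "s' < j" "j \<le> s" for j
    using inner.tail[OF that] that single by (simp add: entry_take)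
  have s'k: "s' + 1 < k" using inner.head_less single by simp
  let ?t = "extend_with \<tau> (s' + 1) k"
  have T: "entry ?t i = (if i \<le> s' then entry \<tau> i else if i = s' + 1 then k + 1
      else if i < k then k + s' + 1 - i else if i = k then k + 2 else if i = k + 1 then s' + 1 else k)"
    if "1 \<le> i" "i \<le> k + 2" for i
  proof -
    consider "i \<le> s'" | "s' < i" "i < k" | "i = k" | "k < i" by linarith
    then show ?thesis
    proof cases
      case 1
      then show ?thesis using inner_head[OF that(1) 1] that s'k
        by (simp add: entry_extend nth_avoiding_def)
    next
      case 2
      then show ?thesis using inner_tail[of i] that single by (auto simp: entry_extend nth_avoiding_def)
    next
      case 3
      then show ?thesis using tail[of k] single s'k by (simp add: entry_extend nth_avoiding_def)
    qed (use that s'k in \<open>auto simp: entry_extend\<close>)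
  qed
  have "is_involution ?t"
    unfolding is_involution_iff_entry
  proof (intro allI impI)
    fix i assume "1 \<le> i \<and> i \<le> length ?t"
    then have i: "1 \<le> i" "i \<le> k + 2" by (simp_all add: extend_with_def)
    consider "i \<le> s'" | "i = s' + 1" | "s' + 1 < i" "i < k" | "i = k" | "i = k + 1" | "i = k + 2"
      using i by linarith
    then show "entry ?t (entry ?t i) = i"
    proof cases
      case 1
      then show ?thesis using T[OF i] T[of "entry \<tau> i"] inner_head[of i] i s'k by simp
    next
      case 3
      define j where "j = k + s' + 1 - i"
      have j: "s' + 1 < j" "j < k" "k + s' + 1 - j = i" using 3 by (auto simp: j_def)
      have "entry ?t i = j" using T[OF i] 3 by (simp add: j_def)
      then show ?thesis using T[of j] j by simp
    qed (use T s'k in simp_all)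
  qed
  moreover have "\<not> is_involution (pattern (take (k + 1) ?t))"
  proof -
    let ?\<sigma> = "entry (pattern (take (k + 1) ?t))"
    have "?\<sigma> (k + 1) = s' + 1" "?\<sigma> (s' + 1) = k"
      using entry_pattern_extend[of "s' + 1" k] T s'k by (simp_all add: Let_def)
    then have "?\<sigma> (?\<sigma> (k + 1)) \<noteq> k + 1" by simp
    then show ?thesis
      by (rule not_involution_if_entry[rotated 2]) (simp_all add: extend_with_def pattern_def)
  qed
  ultimately show ?thesis using s'k by (simp add: admissible_pair_def)
qed

lemma admissible_cases:
  assumes "admissible_pair k \<tau> x y"
  shows "(s + 1 < k \<and> x = k + 1 \<and> y = s + 1) \<or>
    (s + 1 = k \<and> y = k \<and> x < k \<and> entry \<tau> x = k - 1)"
proof -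
  let ?t = "extend_with \<tau> x y"
  have xy: "x \<noteq> y" "x \<in> {1..k + 2}" "y \<in> {1..k + 2}" and inv: "is_involution ?t"
    and not_inv: "\<not> is_involution (pattern (take (k + 1) ?t))"
    using assms by (simp_all add: admissible_pair_def)
  have t: "is_perm (k + 1 + 1) ?t" using extend_with_is_perm[OF perm xy] by simp
  have T_inv: "entry ?t (entry ?t i) = i" if "1 \<le> i" "i \<le> k + 2" for i
    using inv that by (simp add: is_involution_iff_entry extend_with_def)
  have Tx: "entry ?t x = k + 1" and Ty: "entry ?t y = k + 2"
    using T_inv[of "k + 1"] T_inv[of "k + 2"] by (simp_all add: entry_extend)
  have y_le: "y \<le> k"
  proof (rule ccontr)
    assume "\<not> y \<le> k"
    then have "k + 1 \<le> entry ?t (k + 1 + 1)" by (simp add: entry_extend)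
    then show False using is_involution_pattern_butlast[OF t inv] not_inv by simp
  qed
  have "x \<noteq> k + 2" using Tx y_le by (auto simp: entry_extend)
  have \<tau>_range: "entry \<tau> i \<le> k" if "1 \<le> i" "i \<le> k" for i
    using is_perm_entry_range[OF perm that] by simp
  have "nth_avoiding x y (entry \<tau> y) = k + 2" using Ty y_le xy by (simp add: entry_extend)
  then have \<tau>y: "entry \<tau> y = k"
    using nth_avoiding_bounds[of "entry \<tau> y" x y] \<tau>_range[of y] y_le xy by simp
  have y: "y = s + 1"
    using is_perm_entry_inj[OF perm, of y "s + 1"] \<tau>y tail[of "s + 1"] y_le xy head_less by simp
  show ?thesis
  proof (cases "x = k + 1")
    case True
    have "s + 1 \<noteq> k" using pattern_involution_if_singleton_layer not_inv True y by auto
    then show ?thesis using True y head_less by simp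
  next
    case False
    then have x_le: "x \<le> k" using xy \<open>x \<noteq> k + 2\<close> by simp
    have "nth_avoiding x y (entry \<tau> x) = k + 1" using Tx x_le xy by (simp add: entry_extend)
    moreover have "entry \<tau> x \<noteq> k" using is_perm_entry_inj[OF perm, of x y] \<tau>y x_le y_le xy by auto
    ultimately have \<tau>x: "entry \<tau> x = k - 1"
      using nth_avoiding_bounds[of "entry \<tau> x" x y] \<tau>_range[of x] x_le xy by simp
    have "s + 1 = k"
    proof (rule ccontr)
      assume "s + 1 \<noteq> k"
      then have long: "s + 1 < k" using head_less by simp
      then have "x = s + 2"
        using is_perm_entry_inj[OF perm, of x "s + 2"] \<tau>x tail[of "s + 2"] x_le xy by simp
      then show False using pattern_involution_if_long_layer[OF long] not_inv y by simp
    qed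
    then show ?thesis using x_le y xy \<tau>x by auto
  qed
qed

lemma admissible_pair_unique:
  assumes "2 \<le> k"
  obtains x0 y0 where "\<And>x y. admissible_pair k \<tau> x y \<longleftrightarrow> x = x0 \<and> y = y0"
proof (cases "s + 1 < k")
  case True
  then show thesis
    using admissible_long_layer[OF True] admissible_cases by (intro that[of "k + 1" "s + 1"]) blast
next
  case False
  then have single: "s + 1 = k" using head_less by simp
  then obtain s' where inner: "last_layer s s' (take s \<tau>)"
    using layered_last_layer[OF head] assms by fastforce
  have "entry \<tau> (s' + 1) = k - 1"
    using last_layer.tail[OF inner, of "s' + 1"] last_layer.head_less[OF inner] single
    by (simp add: entry_take)
  moreover have "s' + 1 \<le> k" using last_layer.head_less[OF inner] single by simp
  ultimately have "x = s' + 1" if "admissible_pair k \<tau> x y" for x y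
    using admissible_cases[OF that] is_perm_entry_inj[OF perm, of x "s' + 1"] that single
    by (auto simp: admissible_pair_def)
  then show thesis
    using admissible_singleton_layer[OF single inner] admissible_cases single
    by (intro that[of "s' + 1" k]) blast
qed

end

theorem mainTheorem11:
  fixes k :: nat and tau :: "nat list"
  assumes "k \<ge> 2" and "is_perm k tau" and "layered k tau"
  shows "\<exists>!t. is_perm (k + 2) t \<and> is_involution t \<and> pattern (take k t) = tau
              \<and> \<not> is_involution (pattern (take (k + 1) t))"
proof -
  obtain s where "last_layer k s tau"
    using layered_last_layer[OF assms(3)] assms(1) by fastforce
  then obtain x0 y0 where "\<And>x y. admissible_pair k tau x y \<longleftrightarrow> x = x0 \<and> y = y0"
    using last_layer.admissible_pair_unique assms(1) by blast
  then show ?thesis unfolding solution_iff_admissible_pair[OF assms(2)] by auto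
qed

end
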